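(* Let $(X,\tau_1,\tau_2)$ be a bitopological space, $i,j\in\{1,2\}$, $i\neq j$, which is $(i,j)$-almost regular, $(i,j)$-semiregular and a $j$-$P$-space. Then $X$ is $\tau_i$-paralindelöf with respect to $\tau_j$ if and only if $X$ is $(i,j)_r$-nearly paralindelöf.
   Context: $(X,\tau_1,\tau_2)$ is a bitopological space and $i,j\in\{1,2\}$, $i\neq j$. For $k\in\{1,2\}$, $k\text{-}\mathrm{int}$ and $k\text{-}\mathrm{cl}$ denote interior and closure with respect to $\tau_k$; "$k$-open" means $\tau_k$-open. A set $A$ is $(i,j)$-regular open if $A=i\text{-}\mathrm{int}(j\text{-}\mathrm{cl}(A))$. $X$ is $(i,j)$-semiregular if the $(i,j)$-regular open sets form a base for $\tau_i$. $X$ is $(i,j)$-almost regular if for each $x\in X$ and each $(i,j)$-regular open set $U$ containing $x$ there is an $(i,j)$-regular open set $V$ with $x\in V\subseteq j\text{-}\mathrm{cl}(V)\subseteq U$. A family $\mathcal V$ refines $\mathcal U$ if each member of $\mathcal V$ is contained in some member of $\mathcal U$; a family is a cover of $X$ if its union is $X$. A family is $k$-locally countable if every $x\in X$ has a $k$-open neighbourhood meeting at most countably many of its members. $X$ is a $k$-$P$-space if every intersection of countably many $k$-open sets is $k$-open. $X$ is $\tau_i$-paralindelöf with respect to $\tau_j$ if every cover of $X$ by $i$-open sets has a refinement which is a cover of $X$ by $i$-open sets and is $j$-locally countable. $X$ is $(i,j)_r$-nearly paralindelöf if every cover $\{U_\alpha:\alpha\in\Delta\}$ of $X$ by $(i,j)$-regular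 open sets has a $j$-locally countable cover $\{V_\beta:\beta\in B\}$ of $X$ by $(i,j)$-regular open sets such that for each $\beta\in B$ there is $\alpha(\beta)\in\Delta$ with $j\text{-}\mathrm{cl}(V_\beta)\subseteq U_{\alpha(\beta)}$. *)

theory Defs
  imports "HOL-Analysis.Analysis"
begin

text \<open>A bitopological space is a pair of topologies Ti, Tj on the same carrier.
  The pair (i,j) is represented by the ordered pair of topologies (Ti, Tj).\<close>

definition bitop :: "'a topology \<Rightarrow> 'a topology \<Rightarrow> bool" where
  "bitop Ti Tj \<longleftrightarrow> topspace Ti = topspace Tj"

definition ij_regular_open :: "'a topology \<Rightarrow> 'a topology \<Rightarrow> 'a set \<Rightarrow> bool" where
  "ij_regular_open Ti Tj A \<longleftrightarrow> A = Ti interior_of (Tj closure_of A)"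

definition ij_semiregular :: "'a topology \<Rightarrow> 'a topology \<Rightarrow> bool" where
  "ij_semiregular Ti Tj \<longleftrightarrow>
     (\<forall>U x. openin Ti U \<and> x \<in> U \<longrightarrow>
        (\<exists>V. ij_regular_open Ti Tj V \<and> x \<in> V \<and> V \<subseteq> U)) \<and>
     (\<forall>V. ij_regular_open Ti Tj V \<longrightarrow> openin Ti V)"

definition ij_almost_regular :: "'a topology \<Rightarrow> 'a topology \<Rightarrow> bool" where
  "ij_almost_regular Ti Tj \<longleftrightarrow>
     (\<forall>x U. x \<in> topspace Ti \<and> ij_regular_open Ti Tj U \<and> x \<in> U \<longrightarrow>
        (\<exists>V. ij_regular_open Ti Tj V \<and> x \<in> V \<and> V \<subseteq> Tj closure_of V
             \<and> Tj closure_of V \<subseteq> U))"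

definition refines :: "'a set set \<Rightarrow> 'a set set \<Rightarrow> bool" where
  "refines \<V> \<U> \<longleftrightarrow> (\<forall>V\<in>\<V>. \<exists>U\<in>\<U>. V \<subseteq> U)"

definition is_cover :: "'a topology \<Rightarrow> 'a set set \<Rightarrow> bool" where
  "is_cover T \<U> \<longleftrightarrow> \<Union>\<U> = topspace T"

definition locally_countable :: "'a topology \<Rightarrow> 'a set set \<Rightarrow> bool" where
  "locally_countable T \<U> \<longleftrightarrow>
     (\<forall>x\<in>topspace T. \<exists>W. openin T W \<and> x \<in> W \<and> countable {U\<in>\<U>. U \<inter> W \<noteq> {}})"

definition P_space :: "'a topology \<Rightarrow> bool" where
  "P_space T \<longleftrightarrow>
     (\<forall>\<F>. countable \<F> \<and> \<F> \<noteq> {} \<and> (\<forall>U\<in>\<F>. openin T U) \<longrightarrow> openin T (\<Inter>\<F>))"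

definition paralindelof_wrt :: "'a topology \<Rightarrow> 'a topology \<Rightarrow> bool" where
  "paralindelof_wrt Ti Tj \<longleftrightarrow>
     (\<forall>\<U>. is_cover Ti \<U> \<and> (\<forall>U\<in>\<U>. openin Ti U) \<longrightarrow>
        (\<exists>\<V>. refines \<V> \<U> \<and> is_cover Ti \<V> \<and> (\<forall>V\<in>\<V>. openin Ti V)
             \<and> locally_countable Tj \<V>))"

definition nearly_paralindelof_r :: "'a topology \<Rightarrow> 'a topology \<Rightarrow> bool" where
  "nearly_paralindelof_r Ti Tj \<longleftrightarrow>
     (\<forall>\<U>. is_cover Ti \<U> \<and> (\<forall>U\<in>\<U>. ij_regular_open Ti Tj U) \<longrightarrow>
        (\<exists>\<V>. is_cover Ti \<V> \<and> (\<forall>V\<in>\<V>. ij_regular_open Ti Tj V)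
             \<and> locally_countable Tj \<V>
             \<and> (\<forall>V\<in>\<V>. \<exists>U\<in>\<U>. Tj closure_of V \<subseteq> U)))"

end

theory Submission
  imports Defs
begin

lemma ij_semiregular_openin:
  "ij_semiregular Ti Tj \<Longrightarrow> ij_regular_open Ti Tj V \<Longrightarrow> openin Ti V"
  unfolding ij_semiregular_def by blast

lemma ij_regular_open_subset_topspace:
  "ij_regular_open Ti Tj V \<Longrightarrow> V \<subseteq> topspace Ti"
  unfolding ij_regular_open_def by (metis interior_of_subset_topspace)

lemma openin_subset_interior_of_closure_of:
  assumes "openin Ti W" "topspace Ti = topspace Tj"
  shows "W \<subseteq> Ti interior_of (Tj closure_of W)"
proof (rule interior_of_maximal[OF closure_of_subset assms(1)])
  show "W \<subseteq> topspace Tj" using openin_subset[OF assms(1)] assms(2) by simp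
qed

lemma closure_of_interior_of_closure_of_subset:
  "Tj closure_of (Ti interior_of (Tj closure_of W)) \<subseteq> Tj closure_of W"
  using closure_of_mono[OF interior_of_subset, of Tj Ti "Tj closure_of W"] by simp

lemma ij_regular_open_interior_of_closure_of:
  assumes "openin Ti W" "topspace Ti = topspace Tj"
  shows "ij_regular_open Ti Tj (Ti interior_of (Tj closure_of W))"
proof -
  let ?R = "Ti interior_of (Tj closure_of W)"
  have "W \<subseteq> ?R" using openin_subset_interior_of_closure_of[OF assms] .
  then have "?R \<subseteq> Ti interior_of (Tj closure_of ?R)"
    by (intro interior_of_mono closure_of_mono)
  moreover have "Ti interior_of (Tj closure_of ?R) \<subseteq> ?R"
    by (intro interior_of_mono closure_of_interior_of_closure_of_subset)
  ultimately show ?thesis unfolding ij_regular_open_def by blast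
qed

lemma locally_countable_image_closure_of:
  assumes "locally_countable T \<W>" and "\<And>W. W \<in> \<W> \<Longrightarrow> f W \<subseteq> T closure_of W"
  shows "locally_countable T (f ` \<W>)"
  unfolding locally_countable_def
proof
  fix x assume "x \<in> topspace T"
  then obtain G where G: "openin T G" "x \<in> G" "countable {W\<in>\<W>. W \<inter> G \<noteq> {}}"
    using assms(1) unfolding locally_countable_def by blast
  have "{V\<in>f ` \<W>. V \<inter> G \<noteq> {}} \<subseteq> f ` {W\<in>\<W>. W \<inter> G \<noteq> {}}"
  proof
    fix V assume "V \<in> {V\<in>f ` \<W>. V \<inter> G \<noteq> {}}"
    then obtain W where W: "W \<in> \<W>" "V = f W" "G \<inter> T closure_of W \<noteq> {}"
      using assms(2) by blast
    then have "G \<inter> W \<noteq> {}" using openin_Int_closure_of_eq_empty[OF G(1)] by blast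
    then show "V \<in> f ` {W\<in>\<W>. W \<inter> G \<noteq> {}}" using W by blast
  qed
  then have "countable {V\<in>f ` \<W>. V \<inter> G \<noteq> {}}"
    by (rule countable_subset[OF _ countable_image[OF G(3)]])
  then show "\<exists>G. openin T G \<and> x \<in> G \<and> countable {V\<in>f ` \<W>. V \<inter> G \<noteq> {}}"
    using G by blast
qed

lemma ij_semiregular_regular_open_refinement_cover:
  assumes "ij_semiregular Ti Tj" "is_cover Ti \<U>" "\<forall>U\<in>\<U>. openin Ti U"
  shows "is_cover Ti {V. ij_regular_open Ti Tj V \<and> (\<exists>U\<in>\<U>. V \<subseteq> U)}"
  unfolding is_cover_def
proof
  show "\<Union>{V. ij_regular_open Ti Tj V \<and> (\<exists>U\<in>\<U>. V \<subseteq> U)} \<subseteq> topspace Ti"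
    using ij_regular_open_subset_topspace by blast
  show "topspace Ti \<subseteq> \<Union>{V. ij_regular_open Ti Tj V \<and> (\<exists>U\<in>\<U>. V \<subseteq> U)}"
  proof
    fix x assume "x \<in> topspace Ti"
    then obtain U where U: "U \<in> \<U>" "x \<in> U" using assms(2) unfolding is_cover_def by auto
    then obtain V where "ij_regular_open Ti Tj V" "x \<in> V" "V \<subseteq> U"
      using assms(1,3) unfolding ij_semiregular_def by blast
    then show "x \<in> \<Union>{V. ij_regular_open Ti Tj V \<and> (\<exists>U\<in>\<U>. V \<subseteq> U)}" using U by blast
  qed
qed

lemma ij_almost_regular_closure_refinement_cover:
  assumes "ij_almost_regular Ti Tj" "is_cover Ti \<U>" "\<forall>U\<in>\<U>. ij_regular_open Ti Tj U"
  shows "is_cover Ti {V. ij_regular_open Ti Tj V \<and> (\<exists>U\<in>\<U>. Tj closure_of V \<subseteq> U)}"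
  unfolding is_cover_def
proof
  show "\<Union>{V. ij_regular_open Ti Tj V \<and> (\<exists>U\<in>\<U>. Tj closure_of V \<subseteq> U)} \<subseteq> topspace Ti"
    using ij_regular_open_subset_topspace by blast
  show "topspace Ti \<subseteq> \<Union>{V. ij_regular_open Ti Tj V \<and> (\<exists>U\<in>\<U>. Tj closure_of V \<subseteq> U)}"
  proof
    fix x assume x: "x \<in> topspace Ti"
    then obtain U where U: "U \<in> \<U>" "x \<in> U" using assms(2) unfolding is_cover_def by auto
    then obtain V where "ij_regular_open Ti Tj V" "x \<in> V" "Tj closure_of V \<subseteq> U"
      using x assms(1,3) unfolding ij_almost_regular_def by blast
    then show "x \<in> \<Union>{V. ij_regular_open Ti Tj V \<and> (\<exists>U\<in>\<U>. Tj closure_of V \<subseteq> U)}"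
      using U by blast
  qed
qed

lemma paralindelof_wrt_imp_nearly_paralindelof_r:
  assumes top: "topspace Ti = topspace Tj"
    and almost: "ij_almost_regular Ti Tj"
    and semi: "ij_semiregular Ti Tj"
    and para: "paralindelof_wrt Ti Tj"
  shows "nearly_paralindelof_r Ti Tj"
  unfolding nearly_paralindelof_r_def
proof (intro allI impI)
  fix \<U> assume \<U>: "is_cover Ti \<U> \<and> (\<forall>U\<in>\<U>. ij_regular_open Ti Tj U)"
  define \<V> where "\<V> = {V. ij_regular_open Ti Tj V \<and> (\<exists>U\<in>\<U>. Tj closure_of V \<subseteq> U)}"
  have "is_cover Ti \<V>"
    unfolding \<V>_def using ij_almost_regular_closure_refinement_cover almost \<U> by blast
  moreover have "\<forall>V\<in>\<V>. openin Ti V" using ij_semiregular_openin[OF semi] unfolding \<V>_def by blast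
  ultimately obtain \<W> where \<W>: "refines \<W> \<V>" "is_cover Ti \<W>" "\<forall>W\<in>\<W>. openin Ti W"
      "locally_countable Tj \<W>"
    using para unfolding paralindelof_wrt_def by blast
  define R where "R W = Ti interior_of (Tj closure_of W)" for W
  have "W \<subseteq> R W" if "W \<in> \<W>" for W
    unfolding R_def using \<W>(3) that openin_subset_interior_of_closure_of[OF _ top] by blast
  then have "topspace Ti \<subseteq> \<Union>(R ` \<W>)"
    using \<W>(2) unfolding is_cover_def by blast
  moreover have "\<Union>(R ` \<W>) \<subseteq> topspace Ti"
    by (simp add: R_def UN_least interior_of_subset_topspace)
  ultimately have "is_cover Ti (R ` \<W>)"
    unfolding is_cover_def by (rule antisym[rotated])
  moreover have "\<forall>V\<in>R ` \<W>. ij_regular_open Ti Tj V"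
    using \<W>(3) ij_regular_open_interior_of_closure_of[OF _ top] unfolding R_def by blast
  moreover have "locally_countable Tj (R ` \<W>)"
    by (rule locally_countable_image_closure_of[OF \<W>(4)]) (simp add: R_def interior_of_subset)
  moreover have "\<exists>U\<in>\<U>. Tj closure_of (R W) \<subseteq> U" if "W \<in> \<W>" for W
  proof -
    obtain V U where "W \<subseteq> V" "U \<in> \<U>" "Tj closure_of V \<subseteq> U"
      using \<W>(1) \<open>W \<in> \<W>\<close> unfolding refines_def \<V>_def by blast
    moreover have "Tj closure_of (R W) \<subseteq> Tj closure_of W"
      unfolding R_def by (rule closure_of_interior_of_closure_of_subset)
    moreover have "Tj closure_of W \<subseteq> Tj closure_of V"
      using \<open>W \<subseteq> V\<close> by (rule closure_of_mono)
    ultimately show ?thesis by blast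
  qed
  ultimately show "\<exists>\<N>. is_cover Ti \<N> \<and> (\<forall>V\<in>\<N>. ij_regular_open Ti Tj V)
      \<and> locally_countable Tj \<N> \<and> (\<forall>V\<in>\<N>. \<exists>U\<in>\<U>. Tj closure_of V \<subseteq> U)"
    by (intro exI[of _ "R ` \<W>"]) blast
qed

lemma nearly_paralindelof_r_imp_paralindelof_wrt:
  assumes top: "topspace Ti = topspace Tj"
    and semi: "ij_semiregular Ti Tj"
    and near: "nearly_paralindelof_r Ti Tj"
  shows "paralindelof_wrt Ti Tj"
  unfolding paralindelof_wrt_def
proof (intro allI impI)
  fix \<U> assume \<U>: "is_cover Ti \<U> \<and> (\<forall>U\<in>\<U>. openin Ti U)"
  define \<V> where "\<V> = {V. ij_regular_open Ti Tj V \<and> (\<exists>U\<in>\<U>. V \<subseteq> U)}"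
  have "is_cover Ti \<V>"
    unfolding \<V>_def using ij_semiregular_regular_open_refinement_cover semi \<U> by blast
  moreover have "\<forall>V\<in>\<V>. ij_regular_open Ti Tj V" unfolding \<V>_def by blast
  ultimately obtain \<W> where \<W>: "is_cover Ti \<W>" "\<forall>W\<in>\<W>. ij_regular_open Ti Tj W"
      "locally_countable Tj \<W>" "\<forall>W\<in>\<W>. \<exists>V\<in>\<V>. Tj closure_of W \<subseteq> V"
    using near unfolding nearly_paralindelof_r_def by blast
  have "refines \<W> \<U>"
    unfolding refines_def
  proof
    fix W assume "W \<in> \<W>"
    then obtain V where "V \<in> \<V>" "Tj closure_of W \<subseteq> V"
      using \<W>(4) by blast
    then obtain U where "Tj closure_of W \<subseteq> U" "U \<in> \<U>"
      unfolding \<V>_def by blast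
    moreover have "W \<subseteq> Tj closure_of W"
      using ij_regular_open_subset_topspace[of Ti Tj W] \<W>(2) \<open>W \<in> \<W>\<close> top
      by (simp add: closure_of_subset)
    ultimately show "\<exists>U\<in>\<U>. W \<subseteq> U" by blast
  qed
  moreover have "\<forall>W\<in>\<W>. openin Ti W" using \<W>(2) ij_semiregular_openin[OF semi] by blast
  ultimately show "\<exists>\<N>. refines \<N> \<U> \<and> is_cover Ti \<N> \<and> (\<forall>V\<in>\<N>. openin Ti V)
      \<and> locally_countable Tj \<N>"
    using \<W>(1,3) by (intro exI[of _ \<W>]) blast
qed

theorem mainTheorem10:
  fixes Ti Tj :: "'a topology"
  assumes "bitop Ti Tj"
    and "ij_almost_regular Ti Tj"
    and "ij_semiregular Ti Tj"
    and "P_space Tj"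
  shows "paralindelof_wrt Ti Tj \<longleftrightarrow> nearly_paralindelof_r Ti Tj"
proof -
  have top: "topspace Ti = topspace Tj" using assms(1) by (simp add: bitop_def)
  show ?thesis
  proof
    show "nearly_paralindelof_r Ti Tj" if "paralindelof_wrt Ti Tj"
      using paralindelof_wrt_imp_nearly_paralindelof_r[OF top assms(2,3) that] .
    show "paralindelof_wrt Ti Tj" if "nearly_paralindelof_r Ti Tj"
      using nearly_paralindelof_r_imp_paralindelof_wrt[OF top assms(3) that] .
  qed
qed

end
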